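(* Let $Y$ and $Z$ be random variables such that $Y$ has a continuous distribution function and $a(Z-b)$ is integer-valued for some real numbers $a>0$ and $b$. If $\sigma_Z^2:=\operatorname{Var}Z<\infty$, then $$d_{KS}(Y,Z)\ge\frac{1}{12a\sigma_Z+8}.$$
   Context: $d_{KS}(Y,Z):=\sup_{x\in\mathbb R}|P(Y\le x)-P(Z\le x)|$. *)

theory Defs
  imports "HOL-Probability.Probability"
begin

definition cdf_rv :: "'a measure \<Rightarrow> ('a \<Rightarrow> real) \<Rightarrow> real \<Rightarrow> real" where
  "cdf_rv M X x = measure M {\<omega> \<in> space M. X \<omega> \<le> x}"

definition d_KS :: "'a measure \<Rightarrow> ('a \<Rightarrow> real) \<Rightarrow> 'b measure \<Rightarrow> ('b \<Rightarrow> real) \<Rightarrow> real" where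
  "d_KS M Y N Z = (SUP x\<in>(UNIV::real set). \<bar>cdf_rv M Y x - cdf_rv N Z x\<bar>)"

end

theory Submission
  imports Defs
begin

text \<open>Chebyshev's inequality with radius \<open>t = 2\<sigma> + 1/(2a)\<close> leaves mass at least \<open>3/4\<close> within
  distance \<open>t\<close> of the mean of \<open>Z\<close>. That open interval holds fewer than \<open>2at + 1 = 4a\<sigma> + 2\<close>
  points of the lattice \<open>b + \<int>/a\<close>, so \<open>Z\<close> has an atom of mass \<open>p \<ge> 3/(4(4a\<sigma> + 2))\<close>.
  The distribution function of \<open>Z\<close> jumps by \<open>p\<close> there, and a continuous distribution function
  cannot stay within less than \<open>p/2\<close> of it on both sides of the jump; hence
  \<open>d_KS \<ge> 3/(8(4a\<sigma> + 2)) \<ge> 1/(12a\<sigma> + 8)\<close>.\<close>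

lemma
  fixes L U :: real
  shows finite_Ints_between: "finite {k::int. L < k \<and> k < U}"
    and card_Ints_between_less: "L \<le> U \<Longrightarrow> real (card {k::int. L < k \<and> k < U}) < U - L + 1"
proof -
  have sub: "{k::int. L < k \<and> k < U} \<subseteq> {\<lfloor>L\<rfloor> + 1 .. \<lceil>U\<rceil> - 1}"
    by auto linarith+
  then show "finite {k::int. L < k \<and> k < U}"
    by (rule finite_subset) simp
  assume "L \<le> U"
  have "card {k::int. L < k \<and> k < U} \<le> nat (\<lceil>U\<rceil> - \<lfloor>L\<rfloor> - 1)"
    using card_mono[OF _ sub] by simp
  moreover have "real_of_int (\<lceil>U\<rceil> - \<lfloor>L\<rfloor> - 1) < U - L + 1"
    by linarith
  ultimately show "real (card {k::int. L < k \<and> k < U}) < U - L + 1"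
    using \<open>L \<le> U\<close> by linarith
qed

lemma (in prob_space) prob_abs_dev_less_ge:
  fixes Z :: "'a \<Rightarrow> real" and t :: real
  assumes [measurable]: "random_variable borel Z"
    and "integrable M (\<lambda>\<omega>. (Z \<omega>)\<^sup>2)" and "t > 0"
  shows "1 - variance Z / t\<^sup>2 \<le> prob {\<omega>\<in>space M. \<bar>Z \<omega> - expectation Z\<bar> < t}"
proof -
  have "{\<omega>\<in>space M. \<bar>Z \<omega> - expectation Z\<bar> < t}
      = space M - {\<omega>\<in>space M. \<bar>Z \<omega> - expectation Z\<bar> \<ge> t}"
    by auto
  then have "prob {\<omega>\<in>space M. \<bar>Z \<omega> - expectation Z\<bar> < t}
      = 1 - prob {\<omega>\<in>space M. \<bar>Z \<omega> - expectation Z\<bar> \<ge> t}"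
    by (simp add: prob_compl)
  then show ?thesis
    using Chebyshev_inequality[of Z t] assms by simp
qed

lemma exists_ge_average:
  fixes f :: "'a \<Rightarrow> real"
  assumes "finite K" and "K \<noteq> {}"
  shows "\<exists>k\<in>K. sum f K / card K \<le> f k"
proof -
  have "Max (f ` K) \<in> f ` K"
    using assms by (intro Max_in) auto
  then obtain k where "k \<in> K" and "f k = Max (f ` K)"
    by auto
  have "sum f K \<le> card K * f k"
    using sum_bounded_above[of K f "f k"] assms(1) \<open>f k = Max (f ` K)\<close> by simp
  moreover have "real (card K) > 0"
    using assms by (simp add: card_gt_0_iff)
  ultimately have "sum f K / card K \<le> f k"
    by (simp add: pos_divide_le_eq mult.commute)
  with \<open>k \<in> K\<close> show ?thesis
    by blast
qed

lemma (in prob_space) prob_near_le_sum_lattice_atoms: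
  fixes Z :: "'a \<Rightarrow> real" and a b c t :: real
  assumes [measurable]: "random_variable borel Z"
    and "a > 0"
    and lattice: "AE \<omega> in M. a * (Z \<omega> - b) \<in> \<int>"
  shows "prob {\<omega>\<in>space M. \<bar>Z \<omega> - c\<bar> < t}
    \<le> (\<Sum>k\<in>{k::int. a * (c - b - t) < k \<and> k < a * (c - b + t)}. prob {\<omega>\<in>space M. Z \<omega> = b + k / a})"
    (is "prob ?A \<le> (\<Sum>k\<in>?K. prob (?B k))")
proof -
  have "AE \<omega> in M. \<omega> \<in> ?A \<longrightarrow> \<omega> \<in> (\<Union>k\<in>?K. ?B k)"
    using lattice
  proof eventually_elim
    case (elim \<omega>)
    then obtain k where k: "a * (Z \<omega> - b) = of_int k"
      by (auto elim: Ints_cases)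
    show ?case
    proof
      assume "\<omega> \<in> ?A"
      then have "a * (c - b - t) < a * (Z \<omega> - b)" "a * (Z \<omega> - b) < a * (c - b + t)"
        using \<open>a > 0\<close> by (auto simp: abs_less_iff)
      then have "k \<in> ?K"
        unfolding k by simp
      moreover have "Z \<omega> = b + k / a"
        using k \<open>a > 0\<close> by (simp add: field_simps)
      ultimately show "\<omega> \<in> (\<Union>k\<in>?K. ?B k)"
        using \<open>\<omega> \<in> ?A\<close> by auto
    qed
  qed
  then have "prob ?A \<le> prob (\<Union>k\<in>?K. ?B k)"
    by (rule finite_measure_mono_AE) (use finite_Ints_between in auto)
  also have "\<dots> \<le> (\<Sum>k\<in>?K. prob (?B k))"
    using finite_Ints_between by (intro finite_measure_subadditive_finite) auto
  finally show ?thesis .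
qed

lemma (in prob_space) lattice_atom_ge:
  fixes Z :: "'a \<Rightarrow> real" and a b c t :: real
  assumes [measurable]: "random_variable borel Z"
    and "a > 0" and "t > 0"
    and lattice: "AE \<omega> in M. a * (Z \<omega> - b) \<in> \<int>"
  shows "\<exists>z. prob {\<omega>\<in>space M. \<bar>Z \<omega> - c\<bar> < t} / (2 * a * t + 1) \<le> prob {\<omega>\<in>space M. Z \<omega> = z}"
proof -
  define A where "A = {\<omega>\<in>space M. \<bar>Z \<omega> - c\<bar> < t}"
  define K where "K = {k::int. a * (c - b - t) < k \<and> k < a * (c - b + t)}"
  define p where "p k = prob {\<omega>\<in>space M. Z \<omega> = b + k / a}" for k :: int
  have cover: "prob A \<le> sum p K"
    unfolding A_def K_def p_def by (rule prob_near_le_sum_lattice_atoms[OF assms(1) \<open>a > 0\<close> lattice])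
  have cardK: "real (card K) < 2 * a * t + 1"
    using card_Ints_between_less[of "a * (c - b - t)" "a * (c - b + t)"] \<open>a > 0\<close> \<open>t > 0\<close>
    unfolding K_def by (simp add: algebra_simps)
  have "2 * a * t + 1 > 0"
    using \<open>a > 0\<close> \<open>t > 0\<close> by (simp add: add_pos_pos)
  show ?thesis
  proof (cases "K = {}")
    case True
    then have "prob A / (2 * a * t + 1) \<le> 0"
      using cover \<open>2 * a * t + 1 > 0\<close> by (simp add: divide_nonpos_pos)
    then show ?thesis
      unfolding A_def using measure_nonneg order_trans by blast
  next
    case False
    have finK: "finite K"
      unfolding K_def by (rule finite_Ints_between)
    then obtain k where "sum p K / card K \<le> p k"
      using exists_ge_average[OF _ False] by blast
    have "prob A / (2 * a * t + 1) \<le> sum p K / (2 * a * t + 1)"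
      using cover \<open>2 * a * t + 1 > 0\<close> by (intro divide_right_mono) auto
    also have "\<dots> \<le> sum p K / card K"
      using cardK finK False unfolding p_def
      by (intro divide_left_mono sum_nonneg measure_nonneg) (auto simp: card_gt_0_iff)
    also have "\<dots> \<le> p k" by fact
    finally show ?thesis
      unfolding A_def p_def by blast
  qed
qed

lemma (in prob_space) lattice_atom_ge_variance:
  fixes Z :: "'a \<Rightarrow> real" and a b :: real
  assumes [measurable]: "random_variable borel Z"
    and "a > 0"
    and lattice: "AE \<omega> in M. a * (Z \<omega> - b) \<in> \<int>"
    and square_integrable: "integrable M (\<lambda>\<omega>. (Z \<omega>)\<^sup>2)"
  shows "\<exists>z. 3 / (4 * (4 * a * sqrt (variance Z) + 2)) \<le> prob {\<omega>\<in>space M. Z \<omega> = z}"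
proof -
  define \<sigma> where "\<sigma> = sqrt (variance Z)"
  have "variance Z \<ge> 0"
    by (simp add: integral_nonneg_AE)
  then have \<sigma>: "\<sigma> \<ge> 0" "\<sigma>\<^sup>2 = variance Z"
    unfolding \<sigma>_def by simp_all
  define t where "t = 2 * \<sigma> + 1 / (2 * a)"
  have "t > 0"
    unfolding t_def using \<sigma>(1) \<open>a > 0\<close> by (simp add: add_nonneg_pos)
  have "(2 * \<sigma>)\<^sup>2 \<le> t\<^sup>2"
    unfolding t_def using \<sigma>(1) \<open>a > 0\<close> by (intro power_mono) auto
  then have "variance Z / t\<^sup>2 \<le> 1 / 4"
    using \<sigma>(2) \<open>t > 0\<close> by (simp add: divide_simps power_mult_distrib)
  then have "3 / 4 \<le> prob {\<omega>\<in>space M. \<bar>Z \<omega> - expectation Z\<bar> < t}"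
    using prob_abs_dev_less_ge[OF assms(1) square_integrable \<open>t > 0\<close>] by simp
  have "2 * a * t + 1 = 4 * a * \<sigma> + 2"
    unfolding t_def using \<open>a > 0\<close> by (simp add: field_simps)
  then have "3 / (4 * (4 * a * \<sigma> + 2)) = (3 / 4) / (2 * a * t + 1)"
    by simp
  also have "\<dots> \<le> prob {\<omega>\<in>space M. \<bar>Z \<omega> - expectation Z\<bar> < t} / (2 * a * t + 1)"
    using \<open>3 / 4 \<le> _\<close> \<open>a > 0\<close> \<open>t > 0\<close> by (intro divide_right_mono) auto
  also obtain z where "\<dots> \<le> prob {\<omega>\<in>space M. Z \<omega> = z}"
    using lattice_atom_ge[OF assms(1) \<open>a > 0\<close> \<open>t > 0\<close> lattice] by auto
  finally have "3 / (4 * (4 * a * \<sigma> + 2)) \<le> prob {\<omega>\<in>space M. Z \<omega> = z}" .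
  then show ?thesis
    unfolding \<sigma>_def by blast
qed

lemma abs_cdf_rv_diff_le_d_KS:
  assumes "prob_space M" and "prob_space N"
  shows "\<bar>cdf_rv M Y x - cdf_rv N Z x\<bar> \<le> d_KS M Y N Z"
proof -
  have "\<bar>cdf_rv M Y u - cdf_rv N Z u\<bar> \<le> 1" for u
    using prob_space.prob_le_1[OF assms(1)] prob_space.prob_le_1[OF assms(2)]
    unfolding cdf_rv_def by (smt (verit) measure_nonneg)
  then show ?thesis
    unfolding d_KS_def by (intro cSUP_upper bdd_aboveI2) auto
qed

lemma measure_eq_le_cdf_rv_diff:
  assumes "finite_measure N" and [measurable]: "Z \<in> borel_measurable N" and "x < z"
  shows "measure N {\<omega>\<in>space N. Z \<omega> = z} \<le> cdf_rv N Z z - cdf_rv N Z x"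
proof -
  interpret finite_measure N by fact
  have "measure N {\<omega>\<in>space N. Z \<omega> = z} + cdf_rv N Z x
      = measure N ({\<omega>\<in>space N. Z \<omega> = z} \<union> {\<omega>\<in>space N. Z \<omega> \<le> x})"
    unfolding cdf_rv_def using \<open>x < z\<close> by (subst finite_measure_Union) auto
  also have "\<dots> \<le> cdf_rv N Z z"
    unfolding cdf_rv_def using \<open>x < z\<close> by (intro finite_measure_mono) auto
  finally show ?thesis
    by simp
qed

lemma atom_le_two_d_KS:
  assumes "prob_space M" and "prob_space N" and "Z \<in> borel_measurable N"
    and "isCont (cdf_rv M Y) z"
  shows "measure N {\<omega>\<in>space N. Z \<omega> = z} \<le> 2 * d_KS M Y N Z"
proof -
  define F where "F = cdf_rv M Y"
  have "(F \<longlongrightarrow> F z) (at_left z)"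
    using assms(4) unfolding F_def isCont_def by (rule tendsto_mono[OF at_le, rotated]) simp
  then have "((\<lambda>x. 2 * d_KS M Y N Z + \<bar>F z - F x\<bar>) \<longlongrightarrow> 2 * d_KS M Y N Z + \<bar>F z - F z\<bar>) (at_left z)"
    by (intro tendsto_intros)
  then have "((\<lambda>x. 2 * d_KS M Y N Z + \<bar>F z - F x\<bar>) \<longlongrightarrow> 2 * d_KS M Y N Z) (at_left z)"
    by simp
  moreover have "\<forall>\<^sub>F x in at_left z. measure N {\<omega>\<in>space N. Z \<omega> = z} \<le> 2 * d_KS M Y N Z + \<bar>F z - F x\<bar>"
    using eventually_at_left_real[of "z - 1" z]
  proof (rule eventually_mono)
    fix x assume "x \<in> {z - 1<..<z}"
    then have "measure N {\<omega>\<in>space N. Z \<omega> = z} \<le> cdf_rv N Z z - cdf_rv N Z x"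
      using assms(2,3) by (intro measure_eq_le_cdf_rv_diff) (auto simp: prob_space_def)
    also have "\<dots> \<le> \<bar>cdf_rv N Z z - F z\<bar> + \<bar>F z - F x\<bar> + \<bar>F x - cdf_rv N Z x\<bar>"
      by linarith
    also have "\<dots> \<le> 2 * d_KS M Y N Z + \<bar>F z - F x\<bar>"
      using abs_cdf_rv_diff_le_d_KS[OF assms(1,2), of Y z Z] abs_cdf_rv_diff_le_d_KS[OF assms(1,2), of Y x Z]
      unfolding F_def by (simp add: abs_minus_commute)
    finally show "measure N {\<omega>\<in>space N. Z \<omega> = z} \<le> 2 * d_KS M Y N Z + \<bar>F z - F x\<bar>" .
  qed simp
  ultimately show ?thesis
    by (rule tendsto_lowerbound) simp
qed

theorem lemma5p5:
  fixes M :: "'a measure" and N :: "'b measure"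
    and Y :: "'a \<Rightarrow> real" and Z :: "'b \<Rightarrow> real" and a b :: real
  assumes "prob_space M" and "prob_space N"
    and "Y \<in> borel_measurable M" and "Z \<in> borel_measurable N"
    and "continuous_on UNIV (cdf_rv M Y)"
    and "a > 0"
    and "AE \<omega> in N. a * (Z \<omega> - b) \<in> \<int>"
    and "integrable N (\<lambda>\<omega>. (Z \<omega>)\<^sup>2)"
  shows "d_KS M Y N Z \<ge> 1 / (12 * a * sqrt (prob_space.variance N Z) + 8)"
proof -
  interpret N: prob_space N by fact
  define \<sigma> where "\<sigma> = sqrt (N.variance Z)"
  obtain z where atom: "3 / (4 * (4 * a * \<sigma> + 2)) \<le> measure N {\<omega>\<in>space N. Z \<omega> = z}"
    using N.lattice_atom_ge_variance[OF assms(4,6,7,8)] unfolding \<sigma>_def by blast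
  have jump: "measure N {\<omega>\<in>space N. Z \<omega> = z} \<le> 2 * d_KS M Y N Z"
    using atom_le_two_d_KS[OF assms(1,2,4), of z Y] assms(5)
    by (simp add: continuous_on_eq_continuous_at)
  have "a * \<sigma> \<ge> 0"
    unfolding \<sigma>_def using \<open>a > 0\<close> by (simp add: integral_nonneg_AE)
  then have "2 * (1 / (12 * a * \<sigma> + 8)) \<le> 3 / (4 * (4 * a * \<sigma> + 2))"
    by (simp add: divide_simps mult.assoc mult.commute[of \<sigma>])
  then have "1 / (12 * a * \<sigma> + 8) \<le> d_KS M Y N Z"
    using atom jump by linarith
  then show ?thesis
    unfolding \<sigma>_def .
qed

end
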